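(* Let $\varphi\in\Phi_w(\Omega)$ and $f\in L^2(\Omega)$. Let $u\in L^2(\Omega)$, let $(u_i)\subset L^2(\Omega)$ converge to $u$ in $L^2(\Omega)$ and let $p_i\to1^+$. Then $F(u)\le\liminf_{i\to\infty}F_{p_i}(u_i)$.
   Context: $\Omega\subset\mathbb{R}^n$ is a bounded domain. A function $g$ on $(0,\infty)$ is $L$-almost increasing ($L\ge1$) if $g(s)\le Lg(t)$ whenever $0<s\le t$. A weak $\Phi$-function, $\varphi\in\Phi_w(\Omega)$, is $\varphi:\Omega\times[0,\infty)\to[0,\infty]$ such that for a.e. $x\in\Omega$: for every measurable $h:\Omega\to\mathbb{R}$, $y\mapsto\varphi(y,h(y))$ is measurable; $t\mapsto\varphi(x,t)$ is non-decreasing; $\varphi(x,0)=\lim_{t\to0^+}\varphi(x,t)=0$, $\lim_{t\to\infty}\varphi(x,t)=\infty$; $t\mapsto\varphi(x,t)/t$ is $L$-almost increasing on $(0,\infty)$ with $L$ independent of $x$. $\varphi^p(x,t):=\varphi(x,t)^p$. $\varrho_\varphi(u)=\int_\Omega\varphi(x,|u|)\,dx$; $\|u\|_\varphi=\inf\{\lambda>0:\varrho_\varphi(u/\lambda)\le1\}$, $\|v\|_\varphi=\||v|\|_\varphi$ for vector fields. $L^{1,\varphi}(\Omega)=\{u\in W^{1,1}(\Omega):\|u\|_{L^1(\Omega)}+\|\nabla u\|_\varphi<\infty\}$. For $p>1$, $F_p:L^2(\Omega)\to[0,\infty]$, $F_p(u)=\int_\Omega\varphi(x,|\nabla u|)^p+|u-f|^2\,dx$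 if $u\in L^{1,\varphi^p}(\Omega)\cap L^2(\Omega)$ and $+\infty$ otherwise; $F(u)=\inf\{\liminf_{i\to\infty}\int_\Omega\varphi(x,|\nabla v_i|)+|v_i-f|^2\,dx: v_i\in L^{1,\varphi}(\Omega)\cap L^2(\Omega),\ v_i\to u\text{ in }L^2(\Omega)\}$. *)

theory Defs
  imports "HOL-Analysis.Analysis"
begin

definition bounded_domain :: "'a::euclidean_space set \<Rightarrow> bool" where
  "bounded_domain \<Omega> \<longleftrightarrow> open \<Omega> \<and> connected \<Omega> \<and> \<Omega> \<noteq> {} \<and> bounded \<Omega>"

definition in_L2 :: "'a::euclidean_space set \<Rightarrow> ('a \<Rightarrow> real) \<Rightarrow> bool" where
  "in_L2 \<Omega> u \<longleftrightarrow> u \<in> borel_measurable (lebesgue_on \<Omega>) \<and>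
                   integrable (lebesgue_on \<Omega>) (\<lambda>x. (u x)\<^sup>2)"

definition L2_norm :: "'a::euclidean_space set \<Rightarrow> ('a \<Rightarrow> real) \<Rightarrow> real" where
  "L2_norm \<Omega> u = sqrt (\<integral>x. (u x)\<^sup>2 \<partial>(lebesgue_on \<Omega>))"

definition L2_converges :: "'a::euclidean_space set \<Rightarrow> (nat \<Rightarrow> 'a \<Rightarrow> real) \<Rightarrow> ('a \<Rightarrow> real) \<Rightarrow> bool" where
  "L2_converges \<Omega> v u \<longleftrightarrow> (\<lambda>i. L2_norm \<Omega> (\<lambda>x. v i x - u x)) \<longlonglongrightarrow> 0"

coinductive smooth_fun :: "('a::euclidean_space \<Rightarrow> real) \<Rightarrow> bool" where
  "(\<forall>x. \<psi> differentiable (at x)) \<Longrightarrow>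
   (\<forall>b\<in>Basis. smooth_fun (\<lambda>x. frechet_derivative \<psi> (at x) b)) \<Longrightarrow> smooth_fun \<psi>"

definition test_fun :: "'a::euclidean_space set \<Rightarrow> ('a \<Rightarrow> real) \<Rightarrow> bool" where
  "test_fun \<Omega> \<psi> \<longleftrightarrow> smooth_fun \<psi> \<and> compact (closure {x. \<psi> x \<noteq> 0})
                     \<and> closure {x. \<psi> x \<noteq> 0} \<subseteq> \<Omega>"

text \<open>G is a (locally integrable, here integrable) weak gradient of u on Omega.\<close>
definition is_weak_gradient :: "'a::euclidean_space set \<Rightarrow> ('a \<Rightarrow> real) \<Rightarrow> ('a \<Rightarrow> 'a) \<Rightarrow> bool" where
  "is_weak_gradient \<Omega> u G \<longleftrightarrow>
     (\<forall>b\<in>Basis. integrable (lebesgue_on \<Omega>) (\<lambda>x. G x \<bullet> b)) \<and>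
     (\<forall>\<psi>. test_fun \<Omega> \<psi> \<longrightarrow> (\<forall>b\<in>Basis.
        (\<integral>x. u x * frechet_derivative \<psi> (at x) b \<partial>(lebesgue_on \<Omega>))
          = - (\<integral>x. (G x \<bullet> b) * \<psi> x \<partial>(lebesgue_on \<Omega>))))"

definition in_W11 :: "'a::euclidean_space set \<Rightarrow> ('a \<Rightarrow> real) \<Rightarrow> bool" where
  "in_W11 \<Omega> u \<longleftrightarrow> integrable (lebesgue_on \<Omega>) u \<and> (\<exists>G. is_weak_gradient \<Omega> u G)"

definition weak_grad :: "'a::euclidean_space set \<Rightarrow> ('a \<Rightarrow> real) \<Rightarrow> 'a \<Rightarrow> 'a" where
  "weak_grad \<Omega> u = (SOME G. is_weak_gradient \<Omega> u G)"

definition almost_increasing :: "real \<Rightarrow> (real \<Rightarrow> ennreal) \<Rightarrow> bool" where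
  "almost_increasing L g \<longleftrightarrow> L \<ge> 1 \<and> (\<forall>s t. 0 < s \<and> s \<le> t \<longrightarrow> g s \<le> ennreal L * g t)"

definition weak_Phi :: "'a::euclidean_space set \<Rightarrow> ('a \<Rightarrow> real \<Rightarrow> ennreal) \<Rightarrow> bool" where
  "weak_Phi \<Omega> \<phi> \<longleftrightarrow>
     (\<forall>h. h \<in> borel_measurable (lebesgue_on \<Omega>) \<and> (\<forall>y\<in>\<Omega>. h y \<ge> 0) \<longrightarrow>
          (\<lambda>y. \<phi> y (h y)) \<in> borel_measurable (lebesgue_on \<Omega>)) \<and>
     (\<exists>L. L \<ge> 1 \<and>
       (AE x in lebesgue_on \<Omega>.
          mono_on {0..} (\<phi> x) \<and>
          \<phi> x 0 = 0 \<and> ((\<phi> x) \<longlongrightarrow> 0) (at_right 0) \<and>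
          ((\<phi> x) \<longlongrightarrow> \<infinity>) at_top \<and>
          almost_increasing L (\<lambda>t. \<phi> x t / ennreal t)))"

definition phi_pow :: "('a \<Rightarrow> real \<Rightarrow> ennreal) \<Rightarrow> real \<Rightarrow> 'a \<Rightarrow> real \<Rightarrow> ennreal" where
  "phi_pow \<phi> p x t = (if \<phi> x t = \<infinity> then \<infinity> else ennreal (enn2real (\<phi> x t) powr p))"

definition modular :: "'a::euclidean_space set \<Rightarrow> ('a \<Rightarrow> real \<Rightarrow> ennreal) \<Rightarrow> ('a \<Rightarrow> real) \<Rightarrow> ennreal" where
  "modular \<Omega> \<phi> w = (\<integral>\<^sup>+x. \<phi> x \<bar>w x\<bar> \<partial>(lebesgue_on \<Omega>))"

text \<open>Luxemburg norm of a vector field v, i.e. of |v|; infimum over the empty set is infinity.\<close>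
definition lux_norm_vec :: "'a::euclidean_space set \<Rightarrow> ('a \<Rightarrow> real \<Rightarrow> ennreal) \<Rightarrow> ('a \<Rightarrow> 'a) \<Rightarrow> ennreal" where
  "lux_norm_vec \<Omega> \<phi> v = Inf {ennreal c | c. c > 0 \<and> modular \<Omega> \<phi> (\<lambda>x. norm (v x) / c) \<le> 1}"

definition L1phi :: "'a::euclidean_space set \<Rightarrow> ('a \<Rightarrow> real \<Rightarrow> ennreal) \<Rightarrow> ('a \<Rightarrow> real) \<Rightarrow> bool" where
  "L1phi \<Omega> \<phi> u \<longleftrightarrow> in_W11 \<Omega> u \<and> lux_norm_vec \<Omega> \<phi> (weak_grad \<Omega> u) < \<infinity>"

definition energy :: "'a::euclidean_space set \<Rightarrow> ('a \<Rightarrow> real \<Rightarrow> ennreal) \<Rightarrow> ('a \<Rightarrow> real) \<Rightarrow> ('a \<Rightarrow> real) \<Rightarrow> ennreal" where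
  "energy \<Omega> \<phi> f v = (\<integral>\<^sup>+x. \<phi> x (norm (weak_grad \<Omega> v x)) + ennreal ((v x - f x)\<^sup>2) \<partial>(lebesgue_on \<Omega>))"

definition F_p :: "'a::euclidean_space set \<Rightarrow> ('a \<Rightarrow> real \<Rightarrow> ennreal) \<Rightarrow> ('a \<Rightarrow> real) \<Rightarrow> real \<Rightarrow> ('a \<Rightarrow> real) \<Rightarrow> ennreal" where
  "F_p \<Omega> \<phi> f p u = (if L1phi \<Omega> (phi_pow \<phi> p) u \<and> in_L2 \<Omega> u
                       then energy \<Omega> (phi_pow \<phi> p) f u else \<infinity>)"

definition F_relax :: "'a::euclidean_space set \<Rightarrow> ('a \<Rightarrow> real \<Rightarrow> ennreal) \<Rightarrow> ('a \<Rightarrow> real) \<Rightarrow> ('a \<Rightarrow> real) \<Rightarrow> ennreal" where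
  "F_relax \<Omega> \<phi> f u = Inf {liminf (\<lambda>i. energy \<Omega> \<phi> f (v i)) | v.
       (\<forall>i. L1phi \<Omega> \<phi> (v i) \<and> in_L2 \<Omega> (v i)) \<and> L2_converges \<Omega> v u}"

end

theory Submission imports Defs begin

text \<open>By Young's inequality \<open>a \<le> a\<^sup>p + (1 - 1/p)\<close>, so on the bounded domain the
  \<open>\<phi>\<close>-energy exceeds the \<open>\<phi>\<^sup>p\<close>-energy by at most \<open>(1 - 1/p) |\<Omega>|\<close>, an error that vanishes
  as \<open>p \<rightarrow> 1\<close>. Finite \<open>\<phi>\<^sup>p\<close>-energy therefore gives finite \<open>\<phi>\<close>-modular of the gradient,
  which by almost increasingness of \<open>\<phi>(x,t)/t\<close> bounds the Luxemburg norm, so the members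
  of a subsequence realising the liminf are admissible competitors for the relaxed functional.\<close>

lemma le_powr_add_conjugate:
  fixes a p :: real
  assumes "p > 1" "a \<ge> 0"
  shows "a \<le> a powr p + (1 - 1/p)"
proof -
  define q where "q = p / (p - 1)"
  have q: "q > 1" "1/p + 1/q = 1" using assms by (auto simp: q_def field_simps)
  have "a * 1 \<le> a powr p / p + 1 powr q / q"
    by (rule Youngs_inequality) (use assms q in auto)
  moreover have "a powr p / p \<le> a powr p" using assms
    by (simp add: divide_le_eq mult_le_cancel_left1)
  moreover have "1 / q = 1 - 1/p" using q by linarith
  ultimately show ?thesis by simp
qed

lemma le_phi_pow_add:
  assumes "p > 1"
  shows "\<phi> x t \<le> phi_pow \<phi> p x t + ennreal (1 - 1/p)"
proof (cases "\<phi> x t = \<infinity>")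
  case True then show ?thesis by (simp add: phi_pow_def)
next
  case False
  define a where "a = enn2real (\<phi> x t)"
  have a: "\<phi> x t = ennreal a" "a \<ge> 0" using False by (auto simp: a_def ennreal_enn2real_if)
  have "ennreal a \<le> ennreal (a powr p + (1 - 1/p))"
    using le_powr_add_conjugate[OF assms a(2)] by (rule ennreal_leI)
  also have "\<dots> = ennreal (a powr p) + ennreal (1 - 1/p)"
    by (rule ennreal_plus) (use assms a in \<open>auto simp: field_simps\<close>)
  finally show ?thesis using a False by (simp add: phi_pow_def)
qed

lemma almost_increasing_divide_le:
  fixes g :: "real \<Rightarrow> ennreal"
  assumes ai: "almost_increasing L (\<lambda>t. g t / ennreal t)" and g0: "g 0 = 0"
    and c: "c \<ge> 1" and t: "t \<ge> 0"
  shows "g (t / c) \<le> ennreal (L / c) * g t"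
proof (cases "t = 0")
  case True then show ?thesis using g0 by simp
next
  case False
  have L: "L \<ge> 1" using ai by (simp add: almost_increasing_def)
  define s where "s = t / c"
  have s: "0 < s" "s \<le> t" and tp: "t > 0" using False t c by (auto simp: s_def field_simps)
  have ineq: "g s / ennreal s \<le> ennreal L * (g t / ennreal t)"
    using ai s unfolding almost_increasing_def by blast
  show ?thesis
  proof (cases "g t = \<infinity>")
    case True
    then show ?thesis using L c by (simp add: ennreal_mult_top)
  next
    case False
    then obtain b where b: "g t = ennreal b" "b \<ge> 0" by (cases "g t") auto
    have rhs: "ennreal L * (g t / ennreal t) = ennreal (L * (b / t))"
      using b tp L by (simp add: divide_ennreal ennreal_mult[symmetric])
    have "g s \<noteq> \<infinity>"
      using ineq rhs s by (auto simp: ennreal_top_divide top_unique)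
    then obtain a where a: "g s = ennreal a" "a \<ge> 0" by (cases "g s") auto
    have "ennreal (a / s) \<le> ennreal (L * (b / t))"
      using ineq rhs a s by (simp add: divide_ennreal)
    then have "a / s \<le> L * (b / t)"
      using L b tp by (subst (asm) ennreal_le_iff) auto
    then have "a \<le> L / c * b"
      using s tp c by (simp add: s_def divide_le_eq field_simps)
    then have "ennreal a \<le> ennreal (L / c) * ennreal b"
      using L c b by (simp add: ennreal_leI flip: ennreal_mult)
    then show ?thesis using a b by (simp add: s_def)
  qed
qed

lemma weak_grad_measurable:
  assumes "in_W11 \<Omega> v"
  shows "weak_grad \<Omega> v \<in> borel_measurable (lebesgue_on \<Omega>)"
proof -
  from assms obtain G where "is_weak_gradient \<Omega> v G" by (auto simp: in_W11_def)
  then have "is_weak_gradient \<Omega> v (weak_grad \<Omega> v)"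
    unfolding weak_grad_def by (rule someI[where P="is_weak_gradient \<Omega> v"])
  then show ?thesis
    by (subst borel_measurable_euclidean_space) (auto simp: is_weak_gradient_def)
qed

lemma phi_weak_grad_measurable:
  assumes "weak_Phi \<Omega> \<phi>" "in_W11 \<Omega> v"
  shows "(\<lambda>x. \<phi> x (norm (weak_grad \<Omega> v x))) \<in> borel_measurable (lebesgue_on \<Omega>)"
proof -
  have "(\<lambda>x. norm (weak_grad \<Omega> v x)) \<in> borel_measurable (lebesgue_on \<Omega>)"
    using weak_grad_measurable[OF assms(2)] by measurable
  then show ?thesis using assms(1) unfolding weak_Phi_def by auto
qed

lemma emeasure_bounded_domain:
  assumes "bounded_domain \<Omega>"
  shows "emeasure (lebesgue_on \<Omega>) \<Omega> = ennreal (measure lebesgue \<Omega>)"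
proof -
  have \<Omega>: "\<Omega> \<in> lmeasurable" using assms by (intro lmeasurable_open) (auto simp: bounded_domain_def)
  then have "emeasure (lebesgue_on \<Omega>) \<Omega> = emeasure lebesgue \<Omega>"
    by (simp add: emeasure_restrict_space fmeasurable_def)
  also have "\<dots> = ennreal (measure lebesgue \<Omega>)"
    using \<Omega> by (intro emeasure_eq_ennreal_measure) (auto simp: fmeasurable_def)
  finally show ?thesis .
qed

lemma energy_le_energy_phi_pow:
  assumes \<phi>: "weak_Phi \<Omega> \<phi>" and v: "in_W11 \<Omega> v" "in_L2 \<Omega> v" and f: "in_L2 \<Omega> f"
    and p: "p > 1" and \<Omega>: "bounded_domain \<Omega>"
  shows "energy \<Omega> \<phi> f v
           \<le> energy \<Omega> (phi_pow \<phi> p) f v + ennreal ((1 - 1/p) * measure lebesgue \<Omega>)"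
proof -
  have [measurable]: "(\<lambda>x. phi_pow \<phi> p x (norm (weak_grad \<Omega> v x))) \<in> borel_measurable (lebesgue_on \<Omega>)"
    using phi_weak_grad_measurable[OF \<phi> v(1)] unfolding phi_pow_def by measurable
  have [measurable]: "v \<in> borel_measurable (lebesgue_on \<Omega>)" "f \<in> borel_measurable (lebesgue_on \<Omega>)"
    using v(2) f by (auto simp: in_L2_def)
  have "energy \<Omega> \<phi> f v \<le> (\<integral>\<^sup>+x. (phi_pow \<phi> p x (norm (weak_grad \<Omega> v x)) + ennreal ((v x - f x)\<^sup>2))
         + ennreal (1 - 1/p) \<partial>(lebesgue_on \<Omega>))"
    unfolding energy_def
  proof (rule nn_integral_mono)
    fix x
    show "\<phi> x (norm (weak_grad \<Omega> v x)) + ennreal ((v x - f x)\<^sup>2) \<le>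
      phi_pow \<phi> p x (norm (weak_grad \<Omega> v x)) + ennreal ((v x - f x)\<^sup>2) + ennreal (1 - 1/p)"
      using add_right_mono[OF le_phi_pow_add[OF p], of \<phi> x "norm (weak_grad \<Omega> v x)"
          "ennreal ((v x - f x)\<^sup>2)"]
      by (simp add: ac_simps)
  qed
  also have "\<dots> = energy \<Omega> (phi_pow \<phi> p) f v + (\<integral>\<^sup>+x. ennreal (1 - 1/p) \<partial>(lebesgue_on \<Omega>))"
    unfolding energy_def by (rule nn_integral_add) measurable
  also have "(\<integral>\<^sup>+x. ennreal (1 - 1/p) \<partial>(lebesgue_on \<Omega>)) = ennreal ((1 - 1/p) * measure lebesgue \<Omega>)"
    using emeasure_bounded_domain[OF \<Omega>] p by (simp add: nn_integral_const ennreal_mult mult.commute)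
  finally show ?thesis .
qed

lemma lux_norm_vec_finite:
  assumes \<phi>: "weak_Phi \<Omega> \<phi>" and G: "G \<in> borel_measurable (lebesgue_on \<Omega>)"
    and fin: "(\<integral>\<^sup>+x. \<phi> x (norm (G x)) \<partial>(lebesgue_on \<Omega>)) < \<infinity>"
  shows "lux_norm_vec \<Omega> \<phi> G < \<infinity>"
proof -
  have "(\<lambda>x. norm (G x)) \<in> borel_measurable (lebesgue_on \<Omega>)"
    using G by measurable
  then have gm: "(\<lambda>x. \<phi> x (norm (G x))) \<in> borel_measurable (lebesgue_on \<Omega>)"
    using \<phi> unfolding weak_Phi_def by auto
  obtain M where M: "(\<integral>\<^sup>+x. \<phi> x (norm (G x)) \<partial>(lebesgue_on \<Omega>)) = ennreal M" "M \<ge> 0"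
    using fin by (auto simp: less_top_ennreal)
  from \<phi> obtain L where L: "L \<ge> 1" and AE: "AE x in lebesgue_on \<Omega>.
      \<phi> x 0 = 0 \<and> almost_increasing L (\<lambda>t. \<phi> x t / ennreal t)"
    unfolding weak_Phi_def by (fastforce elim: eventually_mono)
  define c where "c = max 1 (L * M)"
  have c: "c \<ge> 1" "L / c * M \<le> 1" using L M by (auto simp: c_def field_simps)
  have "modular \<Omega> \<phi> (\<lambda>x. norm (G x) / c)
          \<le> (\<integral>\<^sup>+x. ennreal (L / c) * \<phi> x (norm (G x)) \<partial>(lebesgue_on \<Omega>))"
    unfolding modular_def using c(1)
    by (intro nn_integral_mono_AE, use AE in eventually_elim)
       (simp add: almost_increasing_divide_le)
  also have "\<dots> = ennreal (L / c * M)"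
    using L c M by (simp add: nn_integral_cmult[OF gm] ennreal_mult[symmetric])
  also have "\<dots> \<le> 1" using c(2) by (simp add: ennreal_le_1)
  finally have "lux_norm_vec \<Omega> \<phi> G \<le> ennreal c"
    unfolding lux_norm_vec_def using c(1) by (intro Inf_lower) auto
  then show ?thesis using le_less_trans by fastforce
qed

lemma L1phi_if_energy_phi_pow_finite:
  assumes \<phi>: "weak_Phi \<Omega> \<phi>" and \<Omega>: "bounded_domain \<Omega>" and p: "p > 1"
    and v: "L1phi \<Omega> (phi_pow \<phi> p) v" "in_L2 \<Omega> v" and f: "in_L2 \<Omega> f"
    and fin: "energy \<Omega> (phi_pow \<phi> p) f v < \<infinity>"
  shows "L1phi \<Omega> \<phi> v"
proof -
  have W: "in_W11 \<Omega> v" using v(1) by (simp add: L1phi_def)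
  have "(\<integral>\<^sup>+x. \<phi> x (norm (weak_grad \<Omega> v x)) \<partial>(lebesgue_on \<Omega>)) \<le> energy \<Omega> \<phi> f v"
    unfolding energy_def by (rule nn_integral_mono) simp
  also have "\<dots> < \<infinity>"
    using energy_le_energy_phi_pow[OF \<phi> W v(2) f p \<Omega>] fin
    by (simp add: ennreal_add_less_top le_less_trans)
  finally show ?thesis
    using W lux_norm_vec_finite[OF \<phi> weak_grad_measurable[OF W]] by (simp add: L1phi_def)
qed

lemma liminf_finite_subseq_lim:
  fixes X :: "nat \<Rightarrow> ennreal"
  assumes "liminf X < \<infinity>"
  obtains s where "strict_mono s" "(X \<circ> s) \<longlonglongrightarrow> liminf X" "\<And>i. X (s i) < \<infinity>"
proof -
  obtain r where r: "strict_mono r" "(X \<circ> r) \<longlonglongrightarrow> liminf X"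
    using liminf_subseq_lim by blast
  then obtain N where N: "\<And>i. i \<ge> N \<Longrightarrow> X (r i) < \<infinity>"
    using order_tendstoD(2)[OF r(2) assms] by (auto simp: eventually_sequentially)
  show ?thesis
  proof
    show "strict_mono (\<lambda>i. r (i + N))" using r(1) by (simp add: strict_mono_def)
    show "(X \<circ> (\<lambda>i. r (i + N))) \<longlonglongrightarrow> liminf X"
      using LIMSEQ_ignore_initial_segment[OF r(2), of N] by (simp add: o_def)
    show "X (r (i + N)) < \<infinity>" for i by (rule N) simp
  qed
qed

lemma F_relax_le_lim_F_p:
  assumes \<Omega>: "bounded_domain \<Omega>" and \<phi>: "weak_Phi \<Omega> \<phi>" and f: "in_L2 \<Omega> f"
    and conv: "L2_converges \<Omega> v u" and p: "\<forall>i. p i > 1" "p \<longlonglongrightarrow> 1"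
    and fin: "\<And>i. F_p \<Omega> \<phi> f (p i) (v i) < \<infinity>"
    and lim: "(\<lambda>i. F_p \<Omega> \<phi> f (p i) (v i)) \<longlonglongrightarrow> l"
  shows "F_relax \<Omega> \<phi> f u \<le> l"
proof -
  define m where "m = measure lebesgue \<Omega>"
  have v: "L1phi \<Omega> (phi_pow \<phi> (p i)) (v i)" "in_L2 \<Omega> (v i)"
    and Fv: "F_p \<Omega> \<phi> f (p i) (v i) = energy \<Omega> (phi_pow \<phi> (p i)) f (v i)" for i
    using fin[of i] by (auto simp: F_p_def split: if_splits)
  have admissible: "L1phi \<Omega> \<phi> (v i)" for i
    using L1phi_if_energy_phi_pow_finite[OF \<phi> \<Omega> _ v f] p(1) fin Fv by metis
  have "F_relax \<Omega> \<phi> f u \<le> liminf (\<lambda>i. energy \<Omega> \<phi> f (v i))"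
    unfolding F_relax_def using admissible v(2) conv by (intro Inf_lower) blast
  also have "\<dots> \<le> liminf (\<lambda>i. F_p \<Omega> \<phi> f (p i) (v i) + ennreal ((1 - 1 / p i) * m))"
    unfolding Fv m_def using energy_le_energy_phi_pow[OF \<phi> _ v(2) f _ \<Omega>] v(1) p(1)
    by (intro Liminf_mono always_eventually) (simp add: L1phi_def)
  also have "\<dots> = l"
  proof (rule lim_imp_Liminf)
    have "(\<lambda>i. (1 - 1 / p i) * m) \<longlonglongrightarrow> (1 - 1 / 1) * m"
      by (intro tendsto_intros p(2)) simp
    then have "(\<lambda>i. ennreal ((1 - 1 / p i) * m)) \<longlonglongrightarrow> 0"
      using tendsto_ennrealI by fastforce
    from tendsto_add[OF lim this]
    show "(\<lambda>i. F_p \<Omega> \<phi> f (p i) (v i) + ennreal ((1 - 1 / p i) * m)) \<longlonglongrightarrow> l" by simp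
  qed simp
  finally show ?thesis .
qed

theorem mainTheorem12:
  fixes \<Omega> :: "'a::euclidean_space set"
    and \<phi> :: "'a \<Rightarrow> real \<Rightarrow> ennreal"
    and f u :: "'a \<Rightarrow> real"
    and us :: "nat \<Rightarrow> 'a \<Rightarrow> real"
    and p :: "nat \<Rightarrow> real"
  assumes "bounded_domain \<Omega>"
    and "weak_Phi \<Omega> \<phi>"
    and "in_L2 \<Omega> f"
    and "in_L2 \<Omega> u"
    and "\<forall>i. in_L2 \<Omega> (us i)"
    and "L2_converges \<Omega> us u"
    and "\<forall>i. p i > 1"
    and "p \<longlonglongrightarrow> 1"
  shows "F_relax \<Omega> \<phi> f u \<le> liminf (\<lambda>i. F_p \<Omega> \<phi> f (p i) (us i))"
proof (cases "liminf (\<lambda>i. F_p \<Omega> \<phi> f (p i) (us i)) < \<infinity>")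
  case True
  then obtain s where s: "strict_mono s"
      "(\<lambda>i. F_p \<Omega> \<phi> f (p (s i)) (us (s i))) \<longlonglongrightarrow> liminf (\<lambda>i. F_p \<Omega> \<phi> f (p i) (us i))"
      "\<And>i. F_p \<Omega> \<phi> f (p (s i)) (us (s i)) < \<infinity>"
    by (rule liminf_finite_subseq_lim) (simp add: o_def)
  have "L2_converges \<Omega> (us \<circ> s) u"
    using LIMSEQ_subseq_LIMSEQ[OF assms(6)[unfolded L2_converges_def] s(1)]
    by (simp add: L2_converges_def o_def)
  moreover have "(p \<circ> s) \<longlonglongrightarrow> 1" using LIMSEQ_subseq_LIMSEQ[OF assms(8) s(1)] .
  ultimately show ?thesis
    using F_relax_le_lim_F_p[OF assms(1-3), of "us \<circ> s" u "p \<circ> s"] assms(7) s(2,3) by simp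
qed (simp add: less_top[symmetric])

end
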